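(* Let $A$ be a $C^*$-algebra, and let $0<r<\frac{1}{2}$, $\theta\in[0,\infty)$ be real numbers. Suppose $f:A\to A$ satisfies $$\Big\|\mu f\Big(\frac{x+y}{2}\Big)+\mu f\Big(\frac{x-y}{2}\Big)-f(\mu x)+f(a^2)-f(a)a-af(a)+f(w^* )-(f(w))^*\Big\|\le \theta(\|x\|^r\|y\|^r+\|a\|^{2r}+\|w\|^r)$$ for all $\mu\in\mathbb{T}$ and all $x,y,a,w\in A$. Then there exists a unique $*$-Jordan derivation $D:A\to A$ such that $$\|f(x)-D(x)\|\le \frac{3^r\theta}{2-2^r}\|x\|^{2r}$$ for all $x\in A$.
   Context: $\mathbb{T}=\{\mu\in\mathbb{C}:|\mu|=1\}$. A Jordan derivation on an algebra $A$ is a linear map $D:A\to A$ with $D(a^2)=D(a)a+aD(a)$ for all $a\in A$. On a $C^*$-algebra, a $*$-Jordan derivation is a Jordan derivation $D$ with $D(a^* )=(D(a))^*$ for all $a\in A$. *)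

theory Defs
  imports "HOL-Analysis.Analysis"
begin

text \<open>The underlying real Banach algebra
structure is the type class; the complex scalar multiplication cscale extends the
real one, and star is the involution.\<close>

locale cstar_algebra =
  fixes cscale :: "complex \<Rightarrow> 'a::{real_normed_algebra, banach} \<Rightarrow> 'a"
    and star :: "'a \<Rightarrow> 'a"
  assumes cscale_of_real: "\<And>r x. cscale (complex_of_real r) x = r *\<^sub>R x"
    and cscale_add_left: "\<And>a b x. cscale (a + b) x = cscale a x + cscale b x"
    and cscale_add_right: "\<And>a x y. cscale a (x + y) = cscale a x + cscale a y"
    and cscale_assoc: "\<And>a b x. cscale a (cscale b x) = cscale (a * b) x"
    and cscale_mult_left: "\<And>a x y. cscale a (x * y) = cscale a x * y"
    and cscale_mult_right: "\<And>a x y. cscale a (x * y) = x * cscale a y"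
    and norm_cscale: "\<And>a x. norm (cscale a x) = cmod a * norm x"
    and star_star: "\<And>x. star (star x) = x"
    and star_add: "\<And>x y. star (x + y) = star x + star y"
    and star_cscale: "\<And>a x. star (cscale a x) = cscale (cnj a) (star x)"
    and star_mult: "\<And>x y. star (x * y) = star y * star x"
    and cstar_identity: "\<And>x. norm (star x * x) = (norm x)\<^sup>2"

definition complex_linear_map :: "(complex \<Rightarrow> 'a \<Rightarrow> 'a) \<Rightarrow> ('a::real_normed_algebra \<Rightarrow> 'a) \<Rightarrow> bool" where
  "complex_linear_map cscale D \<longleftrightarrow>
     (\<forall>x y. D (x + y) = D x + D y) \<and> (\<forall>c x. D (cscale c x) = cscale c (D x))"

definition jordan_derivation :: "(complex \<Rightarrow> 'a \<Rightarrow> 'a) \<Rightarrow> ('a::real_normed_algebra \<Rightarrow> 'a) \<Rightarrow> bool" where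
  "jordan_derivation cscale D \<longleftrightarrow>
     complex_linear_map cscale D \<and> (\<forall>a. D (a * a) = D a * a + a * D a)"

definition star_jordan_derivation ::
  "(complex \<Rightarrow> 'a \<Rightarrow> 'a) \<Rightarrow> ('a \<Rightarrow> 'a) \<Rightarrow> ('a::real_normed_algebra \<Rightarrow> 'a) \<Rightarrow> bool" where
  "star_jordan_derivation cscale star D \<longleftrightarrow>
     jordan_derivation cscale D \<and> (\<forall>a. D (star a) = star (D a))"

end

theory Submission
  imports Defs
begin

text \<open>The hypothesis leaves no room for an approximation: taking all but one group of variables
to be 0, it says that the additive, the Jordan and the star defect of f are each bounded by a
multiple of a power \<open>\<le> 2r < 1\<close> of the norms involved. Since f(0) = 0 and f commutes with
doubling, replacing the arguments by their \<open>2\<^sup>n\<close>-multiples scales each defect by \<open>2\<^sup>n\<close> (or \<open>4\<^sup>n\<close>),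
but its bound only by \<open>(2\<^sup>2\<^sup>r)\<^sup>n\<close>; so every defect vanishes and f itself is a *-Jordan derivation.
The same scaling argument shows that two real-homogeneous maps whose distance is bounded by
\<open>K \<parallel>x\<parallel>\<^sup>2\<^sup>r\<close> coincide, which gives uniqueness.\<close>

lemma eq_zero_if_norm_power_scaleR_bounded:
  fixes v :: "'a::real_normed_vector"
  assumes bound: "\<And>n. norm (b ^ n *\<^sub>R v) \<le> C * q ^ n" and "0 \<le> q" "q < b"
  shows "v = 0"
proof (rule ccontr)
  assume "v \<noteq> 0"
  then have v: "norm v > 0" by simp
  have b: "b > 0" using assms(2,3) by linarith
  have "norm v \<le> C" using bound[of 0] by simp
  then have C: "C > 0" using v by linarith
  obtain n where "(q / b) ^ n < norm v / C"
    using real_arch_pow_inv[of "norm v / C" "q / b"] v C assms(2,3) by auto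
  then have "C * q ^ n < b ^ n * norm v"
    using b C by (simp add: power_divide field_simps)
  also have "\<dots> \<le> C * q ^ n" using bound[of n] b by simp
  finally show False by simp
qed

lemma power_powr: "0 \<le> x \<Longrightarrow> (x ^ n) powr p = (x powr p) ^ n" for x :: real
  by (induction n) (simp_all add: powr_mult)

lemma powr_power_two_mult: "((2::real) powr (2 * r)) ^ n = (2 powr r) ^ n * (2 powr r) ^ n"
  by (simp flip: power_mult_distrib powr_add mult_2)

lemma two_powr_less_two: "s < 1 \<Longrightarrow> (2::real) powr s < 2"
  using powr_less_mono[of s 1 2] by simp

lemma exists_unit_complex_Re: "\<bar>s\<bar> \<le> 1 \<Longrightarrow> \<exists>\<mu>. cmod \<mu> = 1 \<and> Re \<mu> = s"
  by (rule exI[of _ "cis (arccos s)"]) simp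

lemma eq_if_homogeneous_and_close:
  fixes g h :: "'a::real_normed_vector \<Rightarrow> 'b::real_normed_vector"
  assumes g: "\<And>t x. g (t *\<^sub>R x) = t *\<^sub>R g x" and h: "\<And>t x. h (t *\<^sub>R x) = t *\<^sub>R h x"
    and close: "\<And>x. norm (g x - h x) \<le> K * norm x powr p" and "p < 1"
  shows "g = h"
proof
  fix x
  have "g x - h x = 0"
  proof (rule eq_zero_if_norm_power_scaleR_bounded[where b = 2 and q = "2 powr p"])
    fix n
    have "norm (2 ^ n *\<^sub>R (g x - h x)) = norm (g (2 ^ n *\<^sub>R x) - h (2 ^ n *\<^sub>R x))"
      by (simp add: g h scaleR_diff_right)
    also have "\<dots> \<le> K * norm x powr p * (2 powr p) ^ n"
      using close[of "2 ^ n *\<^sub>R x"] by (simp add: powr_mult power_powr mult_ac)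
    finally show "norm (2 ^ n *\<^sub>R (g x - h x)) \<le> K * norm x powr p * (2 powr p) ^ n" .
  qed (use \<open>p < 1\<close> two_powr_less_two in auto)
  then show "g x = h x" by simp
qed

context cstar_algebra
begin

lemma cscale_one: "cscale 1 x = x"
  using cscale_of_real[of 1 x] by simp

lemma star_zero: "star 0 = 0"
  using star_add[of 0 0] by simp

lemma star_scaleR: "star (t *\<^sub>R x) = t *\<^sub>R star x"
  using star_cscale[of "of_real t" x] by (simp add: cscale_of_real)

lemma cscale_add_cnj: "cscale \<mu> x + cscale (cnj \<mu>) x = (2 * Re \<mu>) *\<^sub>R x"
  by (simp only: cscale_add_left[symmetric] complex_add_cnj cscale_of_real)

lemma cscale_polar: "cscale c x = cmod c *\<^sub>R cscale (sgn c) x"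
proof -
  have "c = complex_of_real (cmod c) * sgn c"
    by (cases "c = 0") (simp_all add: sgn_eq)
  then have "cscale c x = cscale (complex_of_real (cmod c)) (cscale (sgn c) x)"
    by (metis cscale_assoc)
  then show ?thesis by (simp add: cscale_of_real)
qed

lemma complex_linear_map_scaleR:
  "complex_linear_map cscale D \<Longrightarrow> D (t *\<^sub>R x) = t *\<^sub>R D x"
  unfolding complex_linear_map_def by (metis cscale_of_real)

end

locale star_jordan_functional_inequality = cstar_algebra cscale star
  for cscale :: "complex \<Rightarrow> 'a::{real_normed_algebra, banach} \<Rightarrow> 'a" and star +
  fixes f :: "'a \<Rightarrow> 'a" and r \<theta> :: real
  assumes r_less_half: "r < 1/2"
    and inequality: "\<And>\<mu> x y a w. cmod \<mu> = 1 \<Longrightarrow>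
      norm (cscale \<mu> (f ((1/2) *\<^sub>R (x + y))) + cscale \<mu> (f ((1/2) *\<^sub>R (x - y)))
            - f (cscale \<mu> x) + f (a * a) - f a * a - a * f a + f (star w) - star (f w))
      \<le> \<theta> * (norm x powr r * norm y powr r + norm a powr (2 * r) + norm w powr r)"
begin

lemma f_zero: "f 0 = 0"
proof -
  have "star (f 0) = f 0 + (f 0 + f 0)"
    using inequality[of 1 0 0 0 0] by (simp add: cscale_one star_zero algebra_simps)
  also have "\<dots> = 3 *\<^sub>R f 0"
    using scaleR_left_distrib[of 1 2 "f 0"] by (simp add: scaleR_2)
  finally have "f 0 = 3 *\<^sub>R 3 *\<^sub>R f 0"
    by (metis star_star star_scaleR)
  then show ?thesis
    using scaleR_cancel_right[of 9 "f 0" 1] by simp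
qed

lemma jensen_inequality:
  "cmod \<mu> = 1 \<Longrightarrow> norm (cscale \<mu> (f ((1/2) *\<^sub>R (x + y))) + cscale \<mu> (f ((1/2) *\<^sub>R (x - y)))
     - f (cscale \<mu> x)) \<le> \<theta> * (norm x powr r * norm y powr r)"
  using inequality[of \<mu> x y 0 0] by (simp add: f_zero star_zero)

lemma jordan_star_inequality:
  "norm (f (a * a) - f a * a - a * f a + f (star w) - star (f w))
     \<le> \<theta> * (norm a powr (2 * r) + norm w powr r)"
  using inequality[of 1 0 0 a w] by (simp add: f_zero cscale_one)

lemma f_scaleR_two: "f (2 *\<^sub>R z) = 2 *\<^sub>R f z"
  using jensen_inequality[of 1 "2 *\<^sub>R z" 0] by (simp add: cscale_one scaleR_2)

lemma f_scaleR_power_two: "f (2 ^ n *\<^sub>R z) = 2 ^ n *\<^sub>R f z"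
  by (induction n) (simp_all add: f_scaleR_two flip: scaleR_scaleR)

lemma f_cscale_unit:
  assumes "cmod \<mu> = 1" shows "f (cscale \<mu> x) = cscale \<mu> (f x)"
proof -
  let ?h = "(1/2) *\<^sub>R x"
  have "f (cscale \<mu> x) = cscale \<mu> (f ?h) + cscale \<mu> (f ?h)"
    using jensen_inequality[of \<mu> x 0] assms by simp
  also have "\<dots> = cscale \<mu> (f ?h + f ?h)"
    by (simp add: cscale_add_right)
  also have "f ?h + f ?h = f x"
    using f_scaleR_two[of ?h] by (simp add: scaleR_2)
  finally show ?thesis .
qed

lemma f_add: "f (s + t) = f s + f t"
proof -
  let ?v = "f s + f t - f (s + t)"
  have "?v = 0"
  proof (rule eq_zero_if_norm_power_scaleR_bounded[where b = 2 and q = "2 powr (2 * r)"])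
    fix n :: nat
    let ?x = "2 ^ n *\<^sub>R (s + t)" and ?y = "2 ^ n *\<^sub>R (s - t)"
    have "(1/2) *\<^sub>R (?x + ?y) = 2 ^ n *\<^sub>R s" "(1/2) *\<^sub>R (?x - ?y) = 2 ^ n *\<^sub>R t"
      by (simp_all add: algebra_simps flip: scaleR_2)
    then have "norm (2 ^ n *\<^sub>R ?v) \<le> \<theta> * (norm ?x powr r * norm ?y powr r)"
      using jensen_inequality[of 1 ?x ?y] f_scaleR_power_two[of n "s + t"]
      by (simp add: cscale_one f_scaleR_power_two algebra_simps)
    also have "\<dots> = \<theta> * (norm (s + t) powr r * norm (s - t) powr r) * (2 powr (2 * r)) ^ n"
      using powr_power_two_mult[of r n] by (simp add: powr_mult power_powr mult_ac)
    finally show "norm (2 ^ n *\<^sub>R ?v)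
        \<le> \<theta> * (norm (s + t) powr r * norm (s - t) powr r) * (2 powr (2 * r)) ^ n" .
  qed (use r_less_half two_powr_less_two in auto)
  then show ?thesis by simp
qed

lemma f_jordan: "f (a * a) = f a * a + a * f a"
proof -
  let ?v = "f (a * a) - f a * a - a * f a"
  have "?v = 0"
  proof (rule eq_zero_if_norm_power_scaleR_bounded[where b = 4 and q = "2 powr (2 * r)"])
    fix n :: nat
    let ?a = "2 ^ n *\<^sub>R a"
    have "4 ^ n *\<^sub>R ?v = 2 ^ n *\<^sub>R 2 ^ n *\<^sub>R ?v"
      by (simp flip: power_mult_distrib)
    also have "\<dots> = f (?a * ?a) - f ?a * ?a - ?a * f ?a"
      using f_scaleR_power_two[of n "2 ^ n *\<^sub>R (a * a)"] f_scaleR_power_two[of n "a * a"]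
      by (simp add: f_scaleR_power_two algebra_simps)
    finally have "norm (4 ^ n *\<^sub>R ?v) \<le> \<theta> * norm ?a powr (2 * r)"
      using jordan_star_inequality[of ?a 0] by (simp add: f_zero star_zero)
    also have "\<dots> = \<theta> * norm a powr (2 * r) * (2 powr (2 * r)) ^ n"
      by (simp add: powr_mult power_powr mult_ac)
    finally show "norm (4 ^ n *\<^sub>R ?v) \<le> \<theta> * norm a powr (2 * r) * (2 powr (2 * r)) ^ n" .
  qed (use r_less_half two_powr_less_two[of "2 * r"] in auto)
  then show ?thesis by (simp add: algebra_simps)
qed

lemma f_star: "f (star w) = star (f w)"
proof -
  let ?v = "f (star w) - star (f w)"
  have "?v = 0"
  proof (rule eq_zero_if_norm_power_scaleR_bounded[where b = 2 and q = "2 powr r"])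
    fix n :: nat
    have "norm (2 ^ n *\<^sub>R ?v) \<le> \<theta> * norm (2 ^ n *\<^sub>R w) powr r"
      using jordan_star_inequality[of 0 "2 ^ n *\<^sub>R w"]
      by (simp add: f_zero star_scaleR f_scaleR_power_two scaleR_diff_right)
    also have "\<dots> = \<theta> * norm w powr r * (2 powr r) ^ n"
      by (simp add: powr_mult power_powr mult_ac)
    finally show "norm (2 ^ n *\<^sub>R ?v) \<le> \<theta> * norm w powr r * (2 powr r) ^ n" .
  qed (use r_less_half two_powr_less_two in auto)
  then show ?thesis by simp
qed

text \<open>A real \<open>t\<close> with \<open>\<bar>t\<bar> \<le> 2\<close> is \<open>\<mu> + \<mu>\<^sup>*\<close> for a unit \<open>\<mu>\<close>; a general \<open>t\<close> is reduced to this
case by a power of 2.\<close>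

lemma f_scaleR: "f (t *\<^sub>R x) = t *\<^sub>R f x"
proof -
  have small: "f (s *\<^sub>R x) = s *\<^sub>R f x" if "\<bar>s\<bar> \<le> 2" for s
  proof -
    have "\<bar>s / 2\<bar> \<le> 1" using that by simp
    then obtain \<mu> where \<mu>: "cmod \<mu> = 1" "s = 2 * Re \<mu>"
      using exists_unit_complex_Re by fastforce
    have "f (s *\<^sub>R x) = f (cscale \<mu> x + cscale (cnj \<mu>) x)"
      by (simp only: cscale_add_cnj \<mu>(2))
    also have "\<dots> = cscale \<mu> (f x) + cscale (cnj \<mu>) (f x)"
      using \<mu>(1) by (simp add: f_add f_cscale_unit)
    finally show ?thesis by (simp only: cscale_add_cnj \<mu>(2))
  qed
  obtain n where "\<bar>t\<bar> < 2 ^ n" using real_arch_pow[of 2 "\<bar>t\<bar>"] by auto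
  then have "\<bar>t / 2 ^ n\<bar> \<le> 2" by (simp add: divide_le_eq)
  then have "f (2 ^ n *\<^sub>R ((t / 2 ^ n) *\<^sub>R x)) = 2 ^ n *\<^sub>R ((t / 2 ^ n) *\<^sub>R f x)"
    by (simp only: f_scaleR_power_two small)
  then show ?thesis by simp
qed

lemma f_cscale: "f (cscale c x) = cscale c (f x)"
proof (cases "c = 0")
  case True
  then show ?thesis using cscale_polar[of 0 x] cscale_polar[of 0 "f x"] f_zero by simp
next
  case False
  then have "cmod (sgn c) = 1" by (simp add: norm_sgn)
  then show ?thesis by (simp add: cscale_polar[of c] f_scaleR f_cscale_unit)
qed

theorem star_jordan_derivation_f: "star_jordan_derivation cscale star f"
  unfolding star_jordan_derivation_def jordan_derivation_def complex_linear_map_def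
  using f_add f_cscale f_jordan f_star by blast

end

theorem corollary2p10:
  fixes cscale :: "complex \<Rightarrow> 'a::{real_normed_algebra, banach} \<Rightarrow> 'a"
    and star :: "'a \<Rightarrow> 'a"
    and f :: "'a \<Rightarrow> 'a"
    and r \<theta> :: real
  assumes "cstar_algebra cscale star"
    and "0 < r" and "r < 1/2" and "0 \<le> \<theta>"
    and "\<And>\<mu> x y a w. cmod \<mu> = 1 \<Longrightarrow>
      norm (cscale \<mu> (f ((1/2) *\<^sub>R (x + y))) + cscale \<mu> (f ((1/2) *\<^sub>R (x - y)))
            - f (cscale \<mu> x) + f (a * a) - f a * a - a * f a + f (star w) - star (f w))
      \<le> \<theta> * (norm x powr r * norm y powr r + norm a powr (2 * r) + norm w powr r)"
  shows "\<exists>!D. star_jordan_derivation cscale star D \<and>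
           (\<forall>x. norm (f x - D x) \<le> 3 powr r * \<theta> / (2 - 2 powr r) * norm x powr (2 * r))"
proof -
  interpret star_jordan_functional_inequality cscale star f r \<theta>
    using assms(1,3,5) by (simp add: star_jordan_functional_inequality_def
        star_jordan_functional_inequality_axioms_def)
  define K where "K = 3 powr r * \<theta> / (2 - 2 powr r)"
  have "K \<ge> 0"
    using assms(3,4) two_powr_less_two[of r] unfolding K_def by simp
  moreover have "D = f" if "star_jordan_derivation cscale star D"
    and "\<forall>x. norm (f x - D x) \<le> K * norm x powr (2 * r)" for D
  proof (rule eq_if_homogeneous_and_close[where K = K and p = "2 * r", symmetric])
    show "D (t *\<^sub>R x) = t *\<^sub>R D x" for t x
      using that(1) complex_linear_map_scaleR
      unfolding star_jordan_derivation_def jordan_derivation_def by blast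
  qed (use that assms(3) f_scaleR in auto)
  ultimately show ?thesis
    unfolding K_def[symmetric] using star_jordan_derivation_f by auto
qed

end
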